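(* Let $n\ge1$, $\tau\in S_n$, $\Sigma_0=(1\,2)(3\,4)\cdots(2n-1\,\,2n)\in S_{2n}$, $\Sigma_1'=\prod_{i=1}^n(2i-1,\ 2\tau(i))$ and $\Sigma_{\rm tot}=\Sigma_0\Sigma_1'$, which preserves the set $V_n^-=\{1,3,\dots,2n-1\}$ and the set $V_n^+=\{2,4,\dots,2n\}$. Then the restriction of $\Sigma_{\rm tot}$ to $V_n^-$ has exactly $C(\tau)$ cycles, and the restriction of $\Sigma_{\rm tot}$ to $V_n^+$ also has exactly $C(\tau)$ cycles. Consequently $C(\Sigma_0\Sigma_1')=2C(\tau)$.
   Context: For a permutation $\pi$, $C(\pi)$ denotes the number of cycles of $\pi$ in its disjoint cycle decomposition, fixed points counted as cycles of length one. $S_m$ is the symmetric group on $\{1,\dots,m\}$. *)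

theory Defs
  imports "HOL-Combinatorics.Combinatorics"
begin

text \<open>Number of cycles (fixed points counted) of a permutation f of the finite set A:
  the number of distinct orbits of f through points of A.\<close>
definition num_cycles :: "('a \<Rightarrow> 'a) \<Rightarrow> 'a set \<Rightarrow> nat" where
  "num_cycles f A = card ((\<lambda>x. orbit f x) ` A)"

definition Sigma0 :: "nat \<Rightarrow> nat \<Rightarrow> nat" where
  "Sigma0 n = foldr (\<circ>) (map (\<lambda>i. Transposition.transpose (2*i - 1) (2*i)) [1..<n+1]) id"

definition Sigma1' :: "nat \<Rightarrow> (nat \<Rightarrow> nat) \<Rightarrow> nat \<Rightarrow> nat" where
  "Sigma1' n \<tau> = foldr (\<circ>) (map (\<lambda>i. Transposition.transpose (2*i - 1) (2 * \<tau> i)) [1..<n+1]) id"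

definition Vminus :: "nat \<Rightarrow> nat set" where
  "Vminus n = {2*i - 1 | i. i \<in> {1..n}}"

definition Vplus :: "nat \<Rightarrow> nat set" where
  "Vplus n = {2*i | i. i \<in> {1..n}}"

end

theory Submission
  imports Defs
begin

text \<open>On the odd points \<open>2i - 1\<close> the permutation \<open>Sigma0 n \<circ> Sigma1' n \<tau>\<close> acts as
  \<open>2i - 1 \<mapsto> 2\<tau>(i) - 1\<close>, i.e.\ as \<open>\<tau>\<close> transported along \<open>i \<mapsto> 2i - 1\<close>; on the even points
  it acts as \<open>2\<tau>(i) \<mapsto> 2i\<close>, i.e.\ as \<open>\<tau>\<^sup>-\<^sup>1\<close> transported along \<open>j \<mapsto> 2j\<close>. The number of
  cycles is invariant under such transport and under inversion, and the two invariant halves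
  contribute their cycles independently.\<close>

definition prod_transpositions :: "('i \<Rightarrow> 'a) \<Rightarrow> ('i \<Rightarrow> 'a) \<Rightarrow> 'i list \<Rightarrow> 'a \<Rightarrow> 'a" where
  "prod_transpositions f g xs = foldr (\<circ>) (map (\<lambda>i. transpose (f i) (g i)) xs) id"

lemma prod_transpositions_Nil: "prod_transpositions f g [] = id"
  and prod_transpositions_Cons:
    "prod_transpositions f g (a # xs) = transpose (f a) (g a) \<circ> prod_transpositions f g xs"
  by (simp_all add: prod_transpositions_def)

lemma prod_transpositions_fixes:
  assumes "x \<notin> f ` set xs \<union> g ` set xs"
  shows "prod_transpositions f g xs x = x"
  using assms
  by (induction xs) (auto simp: prod_transpositions_Nil prod_transpositions_Cons transpose_def)

lemma prod_transpositions_swaps: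
  assumes "distinct (map f xs @ map g xs)" and "i \<in> set xs"
  shows "prod_transpositions f g xs (f i) = g i \<and> prod_transpositions f g xs (g i) = f i"
  using assms
proof (induction xs)
  case (Cons a xs)
  let ?P = "prod_transpositions f g xs"
  have distinct: "distinct (f a # g a # map f xs @ map g xs)"
    using Cons.prems(1) by auto
  then have fixes_a: "?P (f a) = f a" "?P (g a) = g a"
    by (auto intro: prod_transpositions_fixes)
  have "?P (f i) = g i \<and> ?P (g i) = f i \<and> f i \<notin> {f a, g a} \<and> g i \<notin> {f a, g a}"
    if "i \<in> set xs"
  proof -
    have "distinct (map f xs @ map g xs)"
      using distinct by simp
    then have "?P (f i) = g i \<and> ?P (g i) = f i"
      using that by (rule Cons.IH)
    moreover have "f i \<in> f ` set xs" "g i \<in> g ` set xs"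
      using that by simp_all
    ultimately show ?thesis
      using distinct by auto
  qed
  then show ?case
    using Cons.prems(2) fixes_a by (auto simp: prod_transpositions_Cons)
qed simp

lemma orbit_conj:
  assumes "g \<in> A \<rightarrow> A" and "\<And>x. x \<in> A \<Longrightarrow> f (h x) = h (g x)" and "x \<in> A"
  shows "orbit f (h x) = h ` orbit g x"
proof -
  have "(f ^^ k) (h x) = h ((g ^^ k) x) \<and> (g ^^ k) x \<in> A" for k
    by (induction k) (use assms in auto)
  then show ?thesis
    unfolding orbit_altdef by auto
qed

lemma orbit_subset_invariant:
  assumes "f \<in> A \<rightarrow> A" and "x \<in> A"
  shows "orbit f x \<subseteq> A"
proof
  fix y assume "y \<in> orbit f x"
  then show "y \<in> A"
    by induction (use assms in auto)
qed

lemma image_conj_permutes: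
  assumes "g permutes A" and "\<And>x. x \<in> A \<Longrightarrow> f (h x) = h (g x)"
  shows "f ` h ` A = h ` A"
proof -
  have "f ` h ` A = h ` g ` A"
    using assms(2) by (force simp: image_image)
  then show ?thesis
    unfolding permutes_image[OF assms(1)] .
qed

lemma num_cycles_conj:
  assumes "inj_on h A" and "g \<in> A \<rightarrow> A" and "\<And>x. x \<in> A \<Longrightarrow> f (h x) = h (g x)"
  shows "num_cycles f (h ` A) = num_cycles g A"
proof -
  have "(\<lambda>x. orbit f x) ` h ` A = image h ` (\<lambda>x. orbit g x) ` A"
    using orbit_conj[of g A f h] assms(2,3) by (force simp: image_image)
  moreover have "inj_on (image h) ((\<lambda>x. orbit g x) ` A)"
    using orbit_subset_invariant[OF assms(2)] inj_on_image_eq_iff[OF assms(1)]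
    by (fastforce intro: inj_onI)
  ultimately show ?thesis
    unfolding num_cycles_def by (simp add: card_image)
qed

lemma num_cycles_inv:
  assumes "permutation f"
  shows "num_cycles (inv f) A = num_cycles f A"
  unfolding num_cycles_def orbit_inv_eq[OF assms] ..

lemma num_cycles_perm_restrict:
  assumes "f ` V = V"
  shows "num_cycles (perm_restrict f V) V = num_cycles f V"
proof -
  have "f \<in> V \<rightarrow> V" using assms by blast
  then have "orbit (perm_restrict f V) x = orbit f x" if "x \<in> V" for x
    using that by (intro orbit_cong0[of x V]) (auto simp: perm_restrict_def)
  then show ?thesis
    unfolding num_cycles_def by (metis (no_types, lifting) image_cong)
qed

lemma num_cycles_Un:
  assumes "finite A" "finite B" "A \<inter> B = {}" "f \<in> A \<rightarrow> A" "f \<in> B \<rightarrow> B"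
  shows "num_cycles f (A \<union> B) = num_cycles f A + num_cycles f B"
proof -
  have "orbit f x \<noteq> orbit f y" if "x \<in> A" "y \<in> B" for x y
    using orbit_subset_invariant[OF assms(4) that(1)] orbit_subset_invariant[OF assms(5) that(2)]
      orbit_nonempty[of f x] assms(3) by blast
  then have "(\<lambda>x. orbit f x) ` A \<inter> (\<lambda>x. orbit f x) ` B = {}"
    by blast
  then show ?thesis
    unfolding num_cycles_def image_Un using assms(1,2) by (simp add: card_Un_disjoint)
qed

lemma set_upt_1_eq_atLeastAtMost: "set [1..<n+1] = {1..n}"
  by auto

lemma inj_on_double_minus_one: "inj_on (\<lambda>i::nat. 2 * i - 1) {1..n}"
  by (auto simp: inj_on_def)

lemma distinct_odds_evens:
  fixes h :: "nat \<Rightarrow> nat"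
  assumes "inj_on h {1..n}"
  shows "distinct (map (\<lambda>i. 2 * i - 1) [1..<n+1] @ map (\<lambda>i. 2 * h i) [1..<n+1])"
proof -
  note inj_on_double_minus_one
  moreover have "inj_on (\<lambda>i. 2 * h i) {1..n}"
    using assms by (intro inj_onI) (auto dest: inj_onD)
  moreover have "(\<lambda>i. 2 * i - 1) ` {1..n} \<inter> (\<lambda>i. 2 * h i) ` {1..n} = {}"
  proof -
    have "2 * i - 1 \<noteq> 2 * h j" if "i \<in> {1..n}" for i j
      using that by (simp only: atLeastAtMost_iff) presburger
    then show ?thesis
      by blast
  qed
  ultimately show ?thesis
    unfolding distinct_append distinct_map set_map set_upt_1_eq_atLeastAtMost
    by (simp only: distinct_upt simp_thms)
qed

lemma Sigma0_eq: "Sigma0 n = prod_transpositions (\<lambda>i. 2 * i - 1) (\<lambda>i. 2 * i) [1..<n+1]"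
  unfolding Sigma0_def prod_transpositions_def ..

lemma Sigma1'_eq: "Sigma1' n \<tau> = prod_transpositions (\<lambda>i. 2 * i - 1) (\<lambda>i. 2 * \<tau> i) [1..<n+1]"
  unfolding Sigma1'_def prod_transpositions_def ..

lemma
  assumes "i \<in> {1..n}"
  shows Sigma0_odd: "Sigma0 n (2 * i - 1) = 2 * i"
    and Sigma0_even: "Sigma0 n (2 * i) = 2 * i - 1"
  using prod_transpositions_swaps[OF distinct_odds_evens[of id n], of i] assms
  unfolding Sigma0_eq set_upt_1_eq_atLeastAtMost by simp_all

lemma
  assumes "\<tau> permutes {1..n}" and "i \<in> {1..n}"
  shows Sigma1'_odd: "Sigma1' n \<tau> (2 * i - 1) = 2 * \<tau> i"
    and Sigma1'_even: "Sigma1' n \<tau> (2 * \<tau> i) = 2 * i - 1"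
  using prod_transpositions_swaps[OF distinct_odds_evens[OF permutes_inj_on[OF assms(1)]], of i] assms(2)
  unfolding Sigma1'_eq set_upt_1_eq_atLeastAtMost by simp_all

lemma Vminus_eq: "Vminus n = (\<lambda>i. 2 * i - 1) ` {1..n}"
  and Vplus_eq: "Vplus n = (\<lambda>i. 2 * i) ` {1..n}"
  by (auto simp: Vminus_def Vplus_def)

lemma Vminus_Un_Vplus: "{1..2 * n} = Vminus n \<union> Vplus n"
proof
  show "{1..2 * n} \<subseteq> Vminus n \<union> Vplus n"
  proof
    fix x assume x: "x \<in> {1..2 * n}"
    show "x \<in> Vminus n \<union> Vplus n"
    proof (cases "even x")
      case True
      then have "x = 2 * (x div 2)" "x div 2 \<in> {1..n}"
        using x by auto
      then show ?thesis
        unfolding Vplus_eq by blast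
    next
      case False
      then have "x = 2 * ((x + 1) div 2) - 1" "(x + 1) div 2 \<in> {1..n}"
        using x by (simp_all only: atLeastAtMost_iff; presburger)+
      then show ?thesis
        unfolding Vminus_eq by blast
    qed
  qed
qed (auto simp: Vminus_def Vplus_def)

lemma Vminus_Int_Vplus: "Vminus n \<inter> Vplus n = {}"
  unfolding Vminus_def Vplus_def by auto presburger

lemma
  assumes "\<tau> permutes {1..n}" and "i \<in> {1..n}"
  shows Sigma_tot_odd: "(Sigma0 n \<circ> Sigma1' n \<tau>) (2 * i - 1) = 2 * \<tau> i - 1"
    and Sigma_tot_even: "(Sigma0 n \<circ> Sigma1' n \<tau>) (2 * i) = 2 * inv \<tau> i"
proof -
  have "\<tau> i \<in> {1..n}" "inv \<tau> i \<in> {1..n}"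
    using assms(2) permutes_in_image[OF assms(1)] permutes_in_image[OF permutes_inv[OF assms(1)]]
    by blast+
  moreover have "\<tau> (inv \<tau> i) = i"
    using permutes_inverses(1)[OF assms(1)] .
  ultimately show "(Sigma0 n \<circ> Sigma1' n \<tau>) (2 * i - 1) = 2 * \<tau> i - 1"
    and "(Sigma0 n \<circ> Sigma1' n \<tau>) (2 * i) = 2 * inv \<tau> i"
    using Sigma1'_odd[OF assms] Sigma1'_even[OF assms(1), of "inv \<tau> i"]
      Sigma0_even[of "\<tau> i"] Sigma0_odd[of "inv \<tau> i"]
    by simp_all
qed

lemma
  assumes "\<tau> permutes {1..n}"
  shows Sigma_tot_image_Vminus: "(Sigma0 n \<circ> Sigma1' n \<tau>) ` Vminus n = Vminus n"
    and num_cycles_Sigma_tot_Vminus: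
      "num_cycles (Sigma0 n \<circ> Sigma1' n \<tau>) (Vminus n) = num_cycles \<tau> {1..n}"
proof -
  have "\<tau> \<in> {1..n} \<rightarrow> {1..n}"
    using permutes_in_image[OF assms] by blast
  with inj_on_double_minus_one
  show "num_cycles (Sigma0 n \<circ> Sigma1' n \<tau>) (Vminus n) = num_cycles \<tau> {1..n}"
    unfolding Vminus_eq using Sigma_tot_odd[OF assms] by (rule num_cycles_conj)
  show "(Sigma0 n \<circ> Sigma1' n \<tau>) ` Vminus n = Vminus n"
    unfolding Vminus_eq using assms Sigma_tot_odd[OF assms] by (rule image_conj_permutes)
qed

lemma
  assumes "\<tau> permutes {1..n}"
  shows Sigma_tot_image_Vplus: "(Sigma0 n \<circ> Sigma1' n \<tau>) ` Vplus n = Vplus n"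
    and num_cycles_Sigma_tot_Vplus:
      "num_cycles (Sigma0 n \<circ> Sigma1' n \<tau>) (Vplus n) = num_cycles \<tau> {1..n}"
proof -
  have perm_inv: "inv \<tau> permutes {1..n}"
    using assms by (rule permutes_inv)
  have "inj_on (\<lambda>i::nat. 2 * i) {1..n}"
    by (simp add: inj_on_def)
  moreover have "inv \<tau> \<in> {1..n} \<rightarrow> {1..n}"
    using permutes_in_image[OF perm_inv] by blast
  ultimately have "num_cycles (Sigma0 n \<circ> Sigma1' n \<tau>) (Vplus n) = num_cycles (inv \<tau>) {1..n}"
    unfolding Vplus_eq using Sigma_tot_even[OF assms] by (rule num_cycles_conj)
  also have "\<dots> = num_cycles \<tau> {1..n}"
    using permutes_imp_permutation[OF _ assms] by (simp add: num_cycles_inv)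
  finally show "num_cycles (Sigma0 n \<circ> Sigma1' n \<tau>) (Vplus n) = num_cycles \<tau> {1..n}" .
  show "(Sigma0 n \<circ> Sigma1' n \<tau>) ` Vplus n = Vplus n"
    unfolding Vplus_eq using perm_inv Sigma_tot_even[OF assms] by (rule image_conj_permutes)
qed

theorem lemma2:
  fixes n :: nat and \<tau> :: "nat \<Rightarrow> nat"
  assumes "n \<ge> 1" and "\<tau> permutes {1..n}"
  defines "Stot \<equiv> Sigma0 n \<circ> Sigma1' n \<tau>"
  shows "Stot ` Vminus n = Vminus n \<and> Stot ` Vplus n = Vplus n
    \<and> num_cycles (perm_restrict Stot (Vminus n)) (Vminus n) = num_cycles \<tau> {1..n}
    \<and> num_cycles (perm_restrict Stot (Vplus n)) (Vplus n) = num_cycles \<tau> {1..n}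
    \<and> num_cycles Stot {1..2*n} = 2 * num_cycles \<tau> {1..n}"
proof -
  note minus = Sigma_tot_image_Vminus[OF assms(2), folded Stot_def]
  note plus = Sigma_tot_image_Vplus[OF assms(2), folded Stot_def]
  note cycles = num_cycles_Sigma_tot_Vminus[OF assms(2), folded Stot_def]
    num_cycles_Sigma_tot_Vplus[OF assms(2), folded Stot_def]
  have "num_cycles Stot {1..2 * n} = num_cycles Stot (Vminus n) + num_cycles Stot (Vplus n)"
    unfolding Vminus_Un_Vplus
  proof (rule num_cycles_Un)
    show "finite (Vminus n)" "finite (Vplus n)"
      by (simp_all add: Vminus_eq Vplus_eq)
    show "Stot \<in> Vminus n \<rightarrow> Vminus n" "Stot \<in> Vplus n \<rightarrow> Vplus n"
      using minus plus by blast+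
  qed (rule Vminus_Int_Vplus)
  with cycles have "num_cycles Stot {1..2 * n} = 2 * num_cycles \<tau> {1..n}"
    by simp
  with minus plus cycles show ?thesis
    unfolding num_cycles_perm_restrict[OF minus] num_cycles_perm_restrict[OF plus] by blast
qed

end
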